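(* Let $\lambda>0$, $r>0$, and suppose $\boldsymbol{\theta}\mapsto f_{\boldsymbol{\theta}}(\mathbf{X})$ is $\mathrm{Lip}(f)$-Lipschitz (w.r.t. the $\ell_2$ norm) on the closed $\ell_2$-ball of radius $r$ around $\boldsymbol{\theta}_0$. Let $(\boldsymbol{\theta}_s)_{s\ge0}$ be an absolutely continuous trajectory with $\boldsymbol{\theta}_{s}|_{s=0}=\boldsymbol{\theta}_0$ satisfying, for almost every $s$, the selectively regularized gradient flow $$\frac{d}{ds}\boldsymbol{\theta}_s=-\nabla\widetilde{\mathcal{R}}(\boldsymbol{\theta}_s)^{\top}-\lambda_s(\boldsymbol{\theta}_s-\boldsymbol{\theta}_0),\qquad \lambda_s=\begin{cases}\lambda &\text{if } \nabla\widetilde{\mathcal{R}}(\boldsymbol{\theta}_s)(\boldsymbol{\theta}_s-\boldsymbol{\theta}_0)\ge 0,\\ 0&\text{otherwise,}\end{cases}$$ and put $\Lambda_t=\int_0^t\lambda_s\,ds$. Then for every $t\ge0$ such that $\boldsymbol{\theta}_s$ lies in that ball for all $s\in[0,t]$, $$\|\boldsymbol{\theta}_t-\boldsymbol{\theta}_0\|\le 2\,\mathrm{Lip}(f)\,\|f_{\boldsymbol{\theta}_0}(\mathbf{X})-\mathbf{Y}\|\int_0^t e^{-(\Lambda_t-\Lambda_s)}\,ds .$$ In the special case where $\lambda_s=\lambda$ for all $s\in[0,t]$, this gives $$\|\boldsymbol{\theta}_t-\boldsymbol{\theta}_0\|\le 2\,\mathrm{Lip}(f)\,\|f_{\boldsymbol{\theta}_0}(\mathbf{X})-\mathbf{Y}\|\,\frac{1-e^{-\lambda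 t}}{\lambda}.$$
   Context: A model $f_{\boldsymbol{\theta}}:\mathbb{R}^d\to\mathbb{R}$ has parameters $\boldsymbol{\theta}\in\mathbb{R}^p$, continuously differentiable in $\boldsymbol{\theta}$; $\boldsymbol{\theta}_0$ are the pretrained parameters. Data $\mathbf{x}_1,\dots,\mathbf{x}_n\in\mathbb{R}^d$, targets $\mathbf{Y}\in\mathbb{R}^n$, $f_{\boldsymbol{\theta}}(\mathbf{X})=(f_{\boldsymbol{\theta}}(\mathbf{x}_i))_{i=1}^n\in\mathbb{R}^n$, Jacobian $\nabla f_{\boldsymbol{\theta}}(\mathbf{X})\in\mathbb{R}^{n\times p}$. Squared-loss risk $\widetilde{\mathcal{R}}(\boldsymbol{\theta})=\|f_{\boldsymbol{\theta}}(\mathbf{X})-\mathbf{Y}\|_2^2$ with row-vector gradient $\nabla\widetilde{\mathcal{R}}(\boldsymbol{\theta})=2(f_{\boldsymbol{\theta}}(\mathbf{X})-\mathbf{Y})^{\top}\nabla f_{\boldsymbol{\theta}}(\mathbf{X})$. All vector norms are Euclidean. *)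

theory Defs
  imports "HOL-Analysis.Analysis"
begin

definition abs_continuous_on :: "real set \<Rightarrow> (real \<Rightarrow> 'a::real_normed_vector) \<Rightarrow> bool" where
  "abs_continuous_on I g \<longleftrightarrow>
     (\<forall>\<epsilon>>0. \<exists>\<delta>>0. \<forall>(n::nat) (a::nat \<Rightarrow> real) b.
        (\<forall>k<n. a k \<le> b k \<and> {a k..b k} \<subseteq> I) \<and>
        (\<forall>j<n. \<forall>k<n. j \<noteq> k \<longrightarrow> b j \<le> a k \<or> b k \<le> a j) \<and>
        (\<Sum>k<n. b k - a k) < \<delta>
        \<longrightarrow> (\<Sum>k<n. norm (g (b k) - g (a k))) < \<epsilon>)"

definition fX :: "(real^'p \<Rightarrow> real^'d \<Rightarrow> real) \<Rightarrow> real^'d^'n \<Rightarrow> real^'p \<Rightarrow> real^'n" where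
  "fX f X \<theta> = (\<chi> i. f \<theta> (X $ i))"

definition risk :: "(real^'p \<Rightarrow> real^'d \<Rightarrow> real) \<Rightarrow> real^'d^'n \<Rightarrow> real^'n \<Rightarrow> real^'p \<Rightarrow> real" where
  "risk f X Y \<theta> = (norm (fX f X \<theta> - Y))\<^sup>2"

text \<open>Transpose of the row-vector gradient 2 (f_theta(X) - Y)^T Jacobian.\<close>
definition risk_grad :: "(real^'p \<Rightarrow> real^'d \<Rightarrow> real) \<Rightarrow> real^'d^'n \<Rightarrow> real^'n \<Rightarrow> real^'p \<Rightarrow> real^'p" where
  "risk_grad f X Y \<theta> = 2 *\<^sub>R (transpose (jacobian (fX f X) (at \<theta>)) *v (fX f X \<theta> - Y))"

definition sel_lambda :: "(real^'p \<Rightarrow> real^'d \<Rightarrow> real) \<Rightarrow> real^'d^'n \<Rightarrow> real^'n \<Rightarrow> real^'p \<Rightarrow> real \<Rightarrow> real^'p \<Rightarrow> real" where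
  "sel_lambda f X Y \<theta>0 lam \<theta> = (if risk_grad f X Y \<theta> \<bullet> (\<theta> - \<theta>0) \<ge> 0 then lam else 0)"

end

theory Submission
  imports Defs
begin

text \<open>
  Put \<open>G = 2 Lip(f) \<parallel>f\<^sub>\<theta>\<^sub>0(X) - Y\<parallel>\<close>. The velocity of the flow is a descent direction of the
  risk, so the residual \<open>\<parallel>f\<^sub>\<theta>\<^sub>s(X) - Y\<parallel>\<close> never exceeds its initial value, and inside the ball
  the Lipschitz bound on the Jacobian gives \<open>\<parallel>\<nabla>R(\<theta>\<^sub>s)\<parallel> \<le> G\<close>. Hence the displacement
  \<open>\<phi>(s) = \<parallel>\<theta>\<^sub>s - \<theta>\<^sub>0\<parallel>\<close> satisfies \<open>\<phi>' \<le> G - \<lambda>\<^sub>s \<phi>\<close> almost everywhere, in the sense of upper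
  Dini derivatives. The function \<open>\<Lambda>\<close> need not be differentiable, but its growth near \<open>s\<close> is at
  most \<open>\<lambda>\<^sub>s\<close>: where \<open>\<lambda>\<^sub>s = 0\<close> the switching function is negative on a neighbourhood, so \<open>\<Lambda>\<close> is
  locally constant there. Consequently the absolutely continuous potential
  \<open>e\<^bsup>\<Lambda>\<^sub>s\<^esup> \<phi>(s) - G \<integral>\<^sub>0\<^sup>s e\<^bsup>\<Lambda>\<^sub>u\<^esup> du\<close> has nonpositive upper Dini derivatives almost
  everywhere, hence is nonincreasing, and at \<open>s = t\<close> this is the claim. This monotonicity
  principle is proved by a gauge (Cousin lemma) argument.
\<close>

section \<open>Absolute continuity\<close>

lemma abs_continuous_onD:
  assumes "abs_continuous_on I g" "e > 0"
  obtains \<delta> where "\<delta> > 0"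
    "\<And>(n::nat) a b. \<forall>k<n. a k \<le> b k \<and> {a k..b k} \<subseteq> I \<Longrightarrow>
       \<forall>j<n. \<forall>k<n. j \<noteq> k \<longrightarrow> b j \<le> a k \<or> b k \<le> a j \<Longrightarrow>
       (\<Sum>k<n. b k - a k) < \<delta> \<Longrightarrow> (\<Sum>k<n. norm (g (b k) - g (a k))) < e"
proof -
  obtain \<delta> where \<delta>: "\<delta> > 0" and small: "\<forall>(n::nat) a b. (\<forall>k<n. a k \<le> b k \<and> {a k..b k} \<subseteq> I) \<and>
      (\<forall>j<n. \<forall>k<n. j \<noteq> k \<longrightarrow> b j \<le> a k \<or> b k \<le> a j) \<and> (\<Sum>k<n. b k - a k) < \<delta> \<longrightarrow>
      (\<Sum>k<n. norm (g (b k) - g (a k))) < e"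
    using mp[OF spec[OF assms(1)[unfolded abs_continuous_on_def], of e] assms(2)] by (elim exE conjE)
  show thesis
    by (rule that[OF \<delta>], rule small[rule_format], intro conjI)
qed

lemma abs_continuous_on_imp_continuous_on:
  assumes "abs_continuous_on {a..b} g"
  shows "continuous_on {a..b} g"
  unfolding continuous_on_iff
proof (intro ballI allI impI)
  fix x e assume x: "x \<in> {a..b}" and e: "(e::real) > 0"
  obtain \<delta> where \<delta>: "\<delta> > 0" and small: "\<And>(n::nat) u v. \<forall>k<n. u k \<le> v k \<and> {u k..v k} \<subseteq> {a..b} \<Longrightarrow>
       \<forall>j<n. \<forall>k<n. j \<noteq> k \<longrightarrow> v j \<le> u k \<or> v k \<le> u j \<Longrightarrow>
       (\<Sum>k<n. v k - u k) < \<delta> \<Longrightarrow> (\<Sum>k<n. norm (g (v k) - g (u k))) < e"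
    using abs_continuous_onD[OF assms e] by blast
  show "\<exists>d>0. \<forall>y\<in>{a..b}. dist y x < d \<longrightarrow> dist (g y) (g x) < e"
  proof (intro exI[of _ \<delta>] conjI ballI impI \<delta>)
    fix y assume y: "y \<in> {a..b}" and "dist y x < \<delta>"
    then have "norm (g (max x y) - g (min x y)) < e"
      using small[of 1 "\<lambda>_. min x y" "\<lambda>_. max x y"] x
      by (auto simp: dist_real_def min_def max_def)
    then show "dist (g y) (g x) < e"
      by (auto simp: dist_norm norm_minus_commute min_def max_def split: if_splits)
  qed
qed

lemma abs_continuous_on_dominated:
  fixes g :: "real \<Rightarrow> 'a::real_normed_vector" and F :: "real \<Rightarrow> 'b::real_normed_vector"
  assumes ac: "abs_continuous_on I g" and C: "C \<ge> 0"
    and dom: "\<And>u v. u \<in> I \<Longrightarrow> v \<in> I \<Longrightarrow> norm (F v - F u) \<le> C * (norm (g v - g u) + \<bar>v - u\<bar>)"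
  shows "abs_continuous_on I F"
  unfolding abs_continuous_on_def
proof (intro allI impI)
  fix e :: real assume e: "e > 0"
  define e' where "e' = e / (2 * (C + 1))"
  have e': "e' > 0" "C * (2 * e') < e"
    using e C by (auto simp: e'_def field_simps)
  obtain \<delta> where \<delta>: "\<delta> > 0" and small: "\<And>(n::nat) a b. \<forall>k<n. a k \<le> b k \<and> {a k..b k} \<subseteq> I \<Longrightarrow>
       \<forall>j<n. \<forall>k<n. j \<noteq> k \<longrightarrow> b j \<le> a k \<or> b k \<le> a j \<Longrightarrow>
       (\<Sum>k<n. b k - a k) < \<delta> \<Longrightarrow> (\<Sum>k<n. norm (g (b k) - g (a k))) < e'"
    using abs_continuous_onD[OF ac e'(1)] by blast
  show "\<exists>\<delta>>0. \<forall>(n::nat) a b. (\<forall>k<n. a k \<le> b k \<and> {a k..b k} \<subseteq> I) \<and>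
      (\<forall>j<n. \<forall>k<n. j \<noteq> k \<longrightarrow> b j \<le> a k \<or> b k \<le> a j) \<and> (\<Sum>k<n. b k - a k) < \<delta> \<longrightarrow>
      (\<Sum>k<n. norm (F (b k) - F (a k))) < e"
  proof (intro exI[of _ "min \<delta> e'"] allI impI conjI)
    fix n :: nat and a b assume H: "(\<forall>k<n. a k \<le> b k \<and> {a k..b k} \<subseteq> I) \<and>
      (\<forall>j<n. \<forall>k<n. j \<noteq> k \<longrightarrow> b j \<le> a k \<or> b k \<le> a j) \<and> (\<Sum>k<n. b k - a k) < min \<delta> e'"
    have "(\<Sum>k<n. norm (F (b k) - F (a k))) \<le> (\<Sum>k<n. C * (norm (g (b k) - g (a k)) + (b k - a k)))"
    proof (rule sum_mono)
      fix k assume "k \<in> {..<n}"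
      then have ab: "a k \<le> b k" "{a k..b k} \<subseteq> I" using H by auto
      then have "a k \<in> I" "b k \<in> I" by auto
      then show "norm (F (b k) - F (a k)) \<le> C * (norm (g (b k) - g (a k)) + (b k - a k))"
        using dom[of "a k" "b k"] ab(1) by simp
    qed
    also have "\<dots> = C * ((\<Sum>k<n. norm (g (b k) - g (a k))) + (\<Sum>k<n. b k - a k))"
      by (simp add: sum_distrib_left[symmetric] sum.distrib)
    also have "\<dots> \<le> C * (2 * e')"
      using H small[of n a b] C by (intro mult_left_mono) auto
    finally show "(\<Sum>k<n. norm (F (b k) - F (a k))) < e" using e' by linarith
  qed (use \<delta> e' in auto)
qed

lemma abs_continuous_on_power2_norm:
  fixes w :: "real \<Rightarrow> 'a::real_normed_vector"
  assumes ac: "abs_continuous_on {a..b} w"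
  shows "abs_continuous_on {a..b} (\<lambda>s. (norm (w s))\<^sup>2)"
proof -
  have "bounded (w ` {a..b})"
    using abs_continuous_on_imp_continuous_on[OF ac]
    by (intro compact_imp_bounded compact_continuous_image) auto
  then obtain M where M: "M > 0" "\<And>s. s \<in> {a..b} \<Longrightarrow> norm (w s) \<le> M"
    unfolding bounded_pos by blast
  show ?thesis
  proof (rule abs_continuous_on_dominated[OF ac, of "2 * M"])
    fix u v assume uv: "u \<in> {a..b}" "v \<in> {a..b}"
    have "\<bar>(norm (w v))\<^sup>2 - (norm (w u))\<^sup>2\<bar> = \<bar>norm (w v) - norm (w u)\<bar> * (norm (w v) + norm (w u))"
      by (simp add: power2_eq_square square_diff_square_factored abs_mult)
    also have "\<dots> \<le> norm (w v - w u) * (2 * M)"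
      using M(2)[OF uv(1)] M(2)[OF uv(2)] by (intro mult_mono norm_triangle_ineq3) auto
    also have "\<dots> \<le> 2 * M * (norm (w v - w u) + \<bar>v - u\<bar>)"
      using M by (simp add: algebra_simps)
    finally show "norm ((norm (w v))\<^sup>2 - (norm (w u))\<^sup>2) \<le> 2 * M * (norm (w v - w u) + \<bar>v - u\<bar>)"
      by simp
  qed (use M in simp)
qed

lemma tagged_division_of_realE:
  assumes "D tagged_division_of {a..b::real}" "p \<in> D"
  obtains x u v where "p = (x, {u..v})" "u \<le> v" "x \<in> {u..v}" "{u..v} \<subseteq> {a..b}"
proof -
  obtain x K where p: "p = (x, K)" by fastforce
  then obtain u v where K: "K = cbox u v" using tagged_division_ofD(4) assms by metis
  moreover have "x \<in> K" "K \<subseteq> {a..b}" using tagged_division_ofD(2,3) assms p by metis+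
  ultimately show thesis using that p by auto
qed

lemma disjoint_open_intervals_le:
  fixes u v u' v' :: real
  assumes "u < v" "u' < v'" "{u<..<v} \<inter> {u'<..<v'} = {}"
  shows "v \<le> u' \<or> v' \<le> u"
proof (rule ccontr)
  assume "\<not> (v \<le> u' \<or> v' \<le> u)"
  then have "(max u u' + min v v') / 2 \<in> {u<..<v} \<inter> {u'<..<v'}"
    using assms by (auto simp: max_def min_def split: if_splits)
  then show False using assms by blast
qed

lemma tagged_division_subset_enumerate:
  fixes a b :: real
  assumes D: "D tagged_division_of {a..b}" and S: "S \<subseteq> D"
  obtains n :: nat and u v where "\<And>k. k < n \<Longrightarrow> u k < v k \<and> {u k..v k} \<subseteq> {a..b}"
    "\<And>j k. j < n \<Longrightarrow> k < n \<Longrightarrow> j \<noteq> k \<Longrightarrow> v j \<le> u k \<or> v k \<le> u j"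
    "\<And>\<phi> :: real \<Rightarrow> real \<Rightarrow> real. (\<And>y. \<phi> y y = 0) \<Longrightarrow>
       (\<Sum>(x, K)\<in>S. \<phi> (Inf K) (Sup K)) = (\<Sum>k<n. \<phi> (u k) (v k))"
proof -
  have finS: "finite S" using D S finite_subset by blast
  define S' where "S' = {p \<in> S. Inf (snd p) < Sup (snd p)}"
  obtain h where h: "bij_betw h {..<card S'} S'"
    using ex_bij_betw_nat_finite[of S'] finS by (auto simp: S'_def atLeast0LessThan)
  define u where "u k = Inf (snd (h k))" for k
  define v where "v k = Sup (snd (h k))" for k
  have hS': "h k \<in> S'" if "k < card S'" for k using h that bij_betwE by blast
  have interval: "snd (h k) = {u k..v k} \<and> u k < v k \<and> {u k..v k} \<subseteq> {a..b}"
    if "k < card S'" for k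
  proof -
    have "h k \<in> D" "Inf (snd (h k)) < Sup (snd (h k))" using hS'[OF that] S by (auto simp: S'_def)
    moreover obtain x c d where "h k = (x, {c..d})" "{c..d} \<subseteq> {a..b}" "c \<le> d"
      using tagged_division_of_realE[OF D \<open>h k \<in> D\<close>] by blast
    ultimately show ?thesis by (simp add: u_def v_def)
  qed
  show thesis
  proof (rule that[of "card S'" u v])
    show "u k < v k \<and> {u k..v k} \<subseteq> {a..b}" if "k < card S'" for k
      using interval[OF that] by blast
    show "v j \<le> u k \<or> v k \<le> u j" if jk: "j < card S'" "k < card S'" "j \<noteq> k" for j k
    proof (rule disjoint_open_intervals_le)
      have "h j \<noteq> h k" using bij_betw_imp_inj_on[OF h] jk by (auto dest: inj_onD)
      moreover have "h j \<in> D" "h k \<in> D" using hS' jk S by (auto simp: S'_def)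
      ultimately have "interior (snd (h j)) \<inter> interior (snd (h k)) = {}"
        using tagged_division_ofD(5)[OF D] by (metis prod.collapse)
      then show "{u j<..<v j} \<inter> {u k<..<v k} = {}" using interval jk by simp
    qed (use interval jk in auto)
    fix \<phi> :: "real \<Rightarrow> real \<Rightarrow> real" assume \<phi>: "\<And>y. \<phi> y y = 0"
    have "(\<Sum>(x, K)\<in>S. \<phi> (Inf K) (Sup K)) = (\<Sum>(x, K)\<in>S'. \<phi> (Inf K) (Sup K))"
    proof (rule sum.mono_neutral_right[OF finS])
      show "\<forall>p\<in>S - S'. (case p of (x, K) \<Rightarrow> \<phi> (Inf K) (Sup K)) = 0"
      proof
        fix p assume p: "p \<in> S - S'"
        then obtain x c d where "p = (x, {c..d})" "c \<le> d"
          using tagged_division_of_realE[OF D] S by blast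
        then show "(case p of (x, K) \<Rightarrow> \<phi> (Inf K) (Sup K)) = 0" using p \<phi> by (auto simp: S'_def)
      qed
    qed (auto simp: S'_def)
    also have "\<dots> = (\<Sum>k<card S'. \<phi> (u k) (v k))"
      using sum.reindex_bij_betw[OF h, of "\<lambda>(x, K). \<phi> (Inf K) (Sup K)"]
      by (simp add: u_def v_def case_prod_beta)
    finally show "(\<Sum>(x, K)\<in>S. \<phi> (Inf K) (Sup K)) = (\<Sum>k<card S'. \<phi> (u k) (v k))" .
  qed
qed

lemma abs_continuous_on_tagged_division:
  fixes g :: "real \<Rightarrow> 'a::real_normed_vector"
  assumes "abs_continuous_on {a..b} g" "e > 0"
  obtains \<delta> where "\<delta> > 0" "\<And>D S. D tagged_division_of {a..b} \<Longrightarrow> S \<subseteq> D \<Longrightarrow>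
    (\<Sum>(x, K)\<in>S. Henstock_Kurzweil_Integration.content K) < \<delta> \<Longrightarrow>
    (\<Sum>(x, K)\<in>S. norm (g (Sup K) - g (Inf K))) < e"
proof -
  obtain \<delta> where \<delta>: "\<delta> > 0" and small: "\<And>(n::nat) u v. \<forall>k<n. u k \<le> v k \<and> {u k..v k} \<subseteq> {a..b} \<Longrightarrow>
       \<forall>j<n. \<forall>k<n. j \<noteq> k \<longrightarrow> v j \<le> u k \<or> v k \<le> u j \<Longrightarrow>
       (\<Sum>k<n. v k - u k) < \<delta> \<Longrightarrow> (\<Sum>k<n. norm (g (v k) - g (u k))) < e"
    using abs_continuous_onD[OF assms] by blast
  show thesis
  proof (rule that[OF \<delta>])
    fix D S assume D: "D tagged_division_of {a..b}" and S: "S \<subseteq> D"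
      and content: "(\<Sum>(x, K)\<in>S. Henstock_Kurzweil_Integration.content K) < \<delta>"
    obtain n :: nat and u v where uv: "\<And>k. k < n \<Longrightarrow> u k < v k \<and> {u k..v k} \<subseteq> {a..b}"
      and disj: "\<And>j k. j < n \<Longrightarrow> k < n \<Longrightarrow> j \<noteq> k \<Longrightarrow> v j \<le> u k \<or> v k \<le> u j"
      and sums: "\<And>\<phi> :: real \<Rightarrow> real \<Rightarrow> real. (\<And>y. \<phi> y y = 0) \<Longrightarrow> (\<Sum>(x, K)\<in>S. \<phi> (Inf K) (Sup K)) = (\<Sum>k<n. \<phi> (u k) (v k))"
      using tagged_division_subset_enumerate[OF D S] by blast
    have "(\<Sum>(x, K)\<in>S. Henstock_Kurzweil_Integration.content K) = (\<Sum>(x, K)\<in>S. Sup K - Inf K)"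
    proof (rule sum.cong[OF refl])
      fix p assume "p \<in> S"
      then obtain x c d where "p = (x, {c..d})" "c \<le> d"
        using tagged_division_of_realE[OF D] S by blast
      then show "(case p of (x, K) \<Rightarrow> Henstock_Kurzweil_Integration.content K) = (case p of (x, K) \<Rightarrow> Sup K - Inf K)"
        by simp
    qed
    then have "(\<Sum>k<n. v k - u k) < \<delta>" using content sums[of "\<lambda>x y. y - x"] by simp
    moreover have "\<forall>k<n. u k \<le> v k \<and> {u k..v k} \<subseteq> {a..b}" using uv less_imp_le by blast
    moreover have "\<forall>j<n. \<forall>k<n. j \<noteq> k \<longrightarrow> v j \<le> u k \<or> v k \<le> u j" using disj by blast
    ultimately have "(\<Sum>k<n. norm (g (v k) - g (u k))) < e" using small by blast
    then show "(\<Sum>(x, K)\<in>S. norm (g (Sup K) - g (Inf K))) < e"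
      using sums[of "\<lambda>x y. norm (g y - g x)"] by simp
  qed
qed

section \<open>Upper Dini derivatives and monotonicity\<close>

lemma negligible_tagged_division_content:
  fixes N :: "real set"
  assumes "negligible N" "\<delta> > 0"
  obtains \<gamma> where "gauge \<gamma>" "\<And>D. D tagged_division_of {a..b} \<Longrightarrow> \<gamma> fine D \<Longrightarrow>
    (\<Sum>(x, K)\<in>{p \<in> D. fst p \<in> N}. Henstock_Kurzweil_Integration.content K) < \<delta>"
proof -
  have "(indicat_real N has_integral 0) (cbox a b)" using assms(1) negligible by blast
  from has_integral[THEN iffD1, rule_format, OF this assms(2)]
  obtain \<gamma> where \<gamma>: "gauge \<gamma>" and small: "\<forall>D. D tagged_division_of cbox a b \<and> \<gamma> fine D \<longrightarrow>
      norm ((\<Sum>(x, K)\<in>D. Henstock_Kurzweil_Integration.content K *\<^sub>R indicat_real N x) - 0) < \<delta>"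
    by (elim exE conjE)
  show thesis
  proof (rule that[OF \<gamma>])
    fix D assume D: "D tagged_division_of {a..b}" "\<gamma> fine D"
    have "(\<Sum>(x, K)\<in>{p \<in> D. fst p \<in> N}. Henstock_Kurzweil_Integration.content K)
        = (\<Sum>p\<in>D. if fst p \<in> N then Henstock_Kurzweil_Integration.content (snd p) else 0)"
      using sum.inter_filter[OF tagged_division_of_finite[OF D(1)]] by (simp add: case_prod_beta)
    also have "\<dots> = (\<Sum>(x, K)\<in>D. Henstock_Kurzweil_Integration.content K *\<^sub>R indicat_real N x)"
      by (rule sum.cong) (auto simp: indicator_def)
    also have "\<dots> < \<delta>" using small D by (simp add: abs_less_iff)
    finally show "(\<Sum>(x, K)\<in>{p \<in> D. fst p \<in> N}. Henstock_Kurzweil_Integration.content K) < \<delta>" .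
  qed
qed

definition upper_dini_nonpos_at :: "(real \<Rightarrow> real) \<Rightarrow> real set \<Rightarrow> real \<Rightarrow> bool" where
  "upper_dini_nonpos_at F S x \<longleftrightarrow> (\<forall>e>0. \<forall>\<^sub>F y in at x within S. (F y - F x) / (y - x) \<le> e)"

lemma upper_dini_nonpos_at_straddle:
  assumes "upper_dini_nonpos_at F S x" "e > 0"
  shows "\<exists>d>0. \<forall>u\<in>S. \<forall>v\<in>S. u \<le> x \<longrightarrow> x \<le> v \<longrightarrow> x - d < u \<longrightarrow> v < x + d \<longrightarrow>
    F v - F u \<le> e * (v - u)"
proof -
  obtain d where d: "d > 0" and quot: "\<And>y. y \<in> S \<Longrightarrow> y \<noteq> x \<Longrightarrow> dist y x < d \<Longrightarrow> (F y - F x) / (y - x) \<le> e"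
    using assms unfolding upper_dini_nonpos_at_def eventually_at by blast
  have right: "F v - F x \<le> e * (v - x)" if "v \<in> S" "x \<le> v" "v < x + d" for v
    using quot[of v] that by (cases "v = x") (auto simp: dist_real_def pos_divide_le_eq)
  have left: "F x - F u \<le> e * (x - u)" if "u \<in> S" "u \<le> x" "x - d < u" for u
    using quot[of u] that by (cases "u = x") (auto simp: dist_real_def neg_divide_le_eq algebra_simps)
  show ?thesis
    using d right left by (fastforce simp: algebra_simps)
qed

lemma upper_dini_nonpos_at_if_has_real_derivative:
  assumes "(F has_real_derivative D) (at x within S)" "D \<le> 0"
  shows "upper_dini_nonpos_at F S x"
  unfolding upper_dini_nonpos_at_def
proof (intro allI impI)
  fix e :: real assume "e > 0"
  then have "\<forall>\<^sub>F y in at x within S. (F y - F x) / (y - x) < e"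
    using assms order_tendstoD(2) by (fastforce simp: has_field_derivative_iff)
  then show "\<forall>\<^sub>F y in at x within S. (F y - F x) / (y - x) \<le> e"
    by (rule eventually_mono) simp
qed

lemma upper_dini_nonpos_gauge:
  assumes dini: "\<And>x. x \<in> S - N \<Longrightarrow> upper_dini_nonpos_at F S x" and e: "e > 0"
  obtains d where "\<And>x. 0 < d x"
    "\<And>x u v. x \<in> S - N \<Longrightarrow> u \<in> S \<Longrightarrow> v \<in> S \<Longrightarrow> u \<le> x \<Longrightarrow> x \<le> v \<Longrightarrow>
      x - d x < u \<Longrightarrow> v < x + d x \<Longrightarrow> F v - F u \<le> e * (v - u)"
proof -
  have "\<forall>x. \<exists>d>0. x \<in> S - N \<longrightarrow> (\<forall>u\<in>S. \<forall>v\<in>S. u \<le> x \<longrightarrow> x \<le> v \<longrightarrow>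
      x - d < u \<longrightarrow> v < x + d \<longrightarrow> F v - F u \<le> e * (v - u))"
  proof
    fix x
    show "\<exists>d>0. x \<in> S - N \<longrightarrow> (\<forall>u\<in>S. \<forall>v\<in>S. u \<le> x \<longrightarrow> x \<le> v \<longrightarrow>
      x - d < u \<longrightarrow> v < x + d \<longrightarrow> F v - F u \<le> e * (v - u))"
    proof (cases "x \<in> S - N")
      case True
      then show ?thesis using upper_dini_nonpos_at_straddle[OF dini e] by blast
    qed (use zero_less_one in blast)
  qed
  then obtain d where d: "\<forall>x. d x > 0 \<and> (x \<in> S - N \<longrightarrow> (\<forall>u\<in>S. \<forall>v\<in>S.
      u \<le> x \<longrightarrow> x \<le> v \<longrightarrow> x - d x < u \<longrightarrow> v < x + d x \<longrightarrow> F v - F u \<le> e * (v - u)))"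
    by (auto dest: choice)
  show thesis
    by (rule that[of d]) (use d in blast)+
qed

lemma abs_continuous_on_upper_dini_nonpos_diff_le:
  fixes F :: "real \<Rightarrow> real"
  assumes ab: "a \<le> b" and ac: "abs_continuous_on {a..b} F" and N: "negligible N"
    and dini: "\<And>x. x \<in> {a..b} - N \<Longrightarrow> upper_dini_nonpos_at F {a..b} x" and e: "e > 0"
  shows "F b - F a \<le> e * (b - a) + e"
proof -
  obtain \<delta> where \<delta>: "\<delta> > 0" and ac_small: "\<And>D S. D tagged_division_of {a..b} \<Longrightarrow> S \<subseteq> D \<Longrightarrow>
      (\<Sum>(x, K)\<in>S. Henstock_Kurzweil_Integration.content K) < \<delta> \<Longrightarrow>
      (\<Sum>(x, K)\<in>S. norm (F (Sup K) - F (Inf K))) < e"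
    using abs_continuous_on_tagged_division[OF ac e] by blast
  obtain \<gamma> where \<gamma>: "gauge \<gamma>" and N_small: "\<And>D. D tagged_division_of {a..b} \<Longrightarrow> \<gamma> fine D \<Longrightarrow>
      (\<Sum>(x, K)\<in>{p \<in> D. fst p \<in> N}. Henstock_Kurzweil_Integration.content K) < \<delta>"
    using negligible_tagged_division_content[OF N \<delta>] by blast
  obtain d where d_pos: "\<And>x. 0 < d x" and straddle: "\<And>x u v. x \<in> {a..b} - N \<Longrightarrow> u \<in> {a..b} \<Longrightarrow>
      v \<in> {a..b} \<Longrightarrow> u \<le> x \<Longrightarrow> x \<le> v \<Longrightarrow> x - d x < u \<Longrightarrow> v < x + d x \<Longrightarrow> F v - F u \<le> e * (v - u)"
    using upper_dini_nonpos_gauge[OF dini e] by blast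
  have "gauge (\<lambda>x. \<gamma> x \<inter> ball x (d x))" using \<gamma> d_pos by (intro gauge_Int gauge_ball_dependent) auto
  then obtain D where D: "D tagged_division_of {a..b}" and fine: "(\<lambda>x. \<gamma> x \<inter> ball x (d x)) fine D"
    using fine_division_exists[of _ a b] by (metis box_real(2))
  define DN where "DN = {p \<in> D. fst p \<in> N}"
  have fin: "finite D" and DN: "DN \<subseteq> D" using D by (auto simp: DN_def)
  have "F b - F a = (\<Sum>(x, K)\<in>D - DN. F (Sup K) - F (Inf K)) + (\<Sum>(x, K)\<in>DN. F (Sup K) - F (Inf K))"
    using additive_tagged_division_1[OF ab D, of F]
      sum.subset_diff[OF DN fin, of "\<lambda>(x, K). F (Sup K) - F (Inf K)"] by linarith
  also have "\<dots> \<le> e * (b - a) + e"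
  proof (rule add_mono)
    have "(\<Sum>(x, K)\<in>D - DN. F (Sup K) - F (Inf K)) \<le> (\<Sum>(x, K)\<in>D - DN. e * Henstock_Kurzweil_Integration.content K)"
    proof (rule sum_mono)
      fix p assume p: "p \<in> D - DN"
      then obtain x u v where puv: "p = (x, {u..v})" "u \<le> v" "x \<in> {u..v}" "{u..v} \<subseteq> {a..b}"
        using tagged_division_of_realE[OF D] by blast
      have "{u..v} \<subseteq> ball x (d x)" using fine p puv(1) by (auto simp: fine_def)
      then have "u \<in> ball x (d x)" "v \<in> ball x (d x)" using puv(2) by auto
      then have "x - d x < u" "v < x + d x" by (auto simp: dist_real_def)
      moreover have "x \<in> {a..b} - N" using p puv by (auto simp: DN_def)
      ultimately have "F v - F u \<le> e * (v - u)" using straddle puv by auto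
      then show "(case p of (x, K) \<Rightarrow> F (Sup K) - F (Inf K))
          \<le> (case p of (x, K) \<Rightarrow> e * Henstock_Kurzweil_Integration.content K)"
        using puv by simp
    qed
    also have "\<dots> \<le> (\<Sum>(x, K)\<in>D. e * Henstock_Kurzweil_Integration.content K)"
      using e fin by (intro sum_mono2) auto
    also have "\<dots> = e * (b - a)"
      using additive_content_tagged_division[of D a b] D ab
      by (simp add: sum_distrib_left[symmetric] case_prod_beta)
    finally show "(\<Sum>(x, K)\<in>D - DN. F (Sup K) - F (Inf K)) \<le> e * (b - a)" .
  next
    have "(\<Sum>(x, K)\<in>DN. F (Sup K) - F (Inf K)) \<le> (\<Sum>(x, K)\<in>DN. norm (F (Sup K) - F (Inf K)))"
      by (intro sum_mono) auto
    also have "\<dots> < e"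
      using ac_small[OF D DN] N_small[OF D] fine by (simp add: DN_def fine_Int)
    finally show "(\<Sum>(x, K)\<in>DN. F (Sup K) - F (Inf K)) \<le> e" by simp
  qed
  finally show ?thesis .
qed

lemma abs_continuous_on_upper_dini_nonpos_imp_le:
  fixes F :: "real \<Rightarrow> real"
  assumes ab: "a \<le> b" and ac: "abs_continuous_on {a..b} F" and N: "negligible N"
    and dini: "\<And>x. x \<in> {a..b} - N \<Longrightarrow> upper_dini_nonpos_at F {a..b} x"
  shows "F b \<le> F a"
proof (rule field_le_epsilon)
  fix \<epsilon> :: real assume "\<epsilon> > 0"
  then have "\<epsilon> / (b - a + 1) > 0" using ab by simp
  moreover have "\<epsilon> / (b - a + 1) * (b - a) + \<epsilon> / (b - a + 1) = \<epsilon> / (b - a + 1) * (b - a + 1)"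
    by (simp only: distrib_left mult_1_right)
  moreover have "\<epsilon> / (b - a + 1) * (b - a + 1) = \<epsilon>" using ab by simp
  ultimately show "F b \<le> F a + \<epsilon>"
    using abs_continuous_on_upper_dini_nonpos_diff_le[OF ab ac N dini, of "\<epsilon> / (b - a + 1)"] by linarith
qed

lemma lipschitz_on_has_derivative_norm_le:
  fixes \<Phi> :: "'a::real_normed_vector \<Rightarrow> 'b::real_normed_vector"
  assumes lip: "L-lipschitz_on S \<Phi>" and z: "z \<in> interior S" and der: "(\<Phi> has_derivative D) (at z)"
  shows "norm (D h) \<le> L * norm h"
proof -
  interpret D: bounded_linear D by (rule has_derivative_bounded_linear[OF der])
  show ?thesis
  proof (cases "h = 0")
    case False
    obtain \<rho> where \<rho>: "\<rho> > 0" "ball z \<rho> \<subseteq> S" using z mem_interior by blast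
    show ?thesis
    proof (rule field_le_epsilon)
      fix \<epsilon> :: real assume "\<epsilon> > 0"
      then have "\<epsilon> / norm h > 0" using False by simp
      then obtain d where d: "d > 0"
        and approx: "\<And>y. norm (y - z) < d \<Longrightarrow> norm (\<Phi> y - \<Phi> z - D (y - z)) \<le> \<epsilon> / norm h * norm (y - z)"
        using der unfolding has_derivative_at_alt by blast
      define \<tau> where "\<tau> = min d \<rho> / (2 * norm h)"
      have \<tau>: "\<tau> > 0" "\<tau> * norm h < d" "\<tau> * norm h < \<rho>"
        using False d \<rho> by (auto simp: \<tau>_def field_simps)
      define y where "y = z + \<tau> *\<^sub>R h"
      have y: "norm (y - z) = \<tau> * norm h" "y \<in> S"
        using \<tau> \<rho> by (auto simp: y_def dist_norm)
      have "\<tau> * norm (D h) \<le> norm (\<Phi> y - \<Phi> z) + norm (\<Phi> y - \<Phi> z - D (y - z))"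
        using norm_triangle_ineq4[of "\<Phi> y - \<Phi> z" "\<Phi> y - \<Phi> z - D (y - z)"] \<tau>
        by (simp add: y_def D.scaleR)
      also have "\<dots> \<le> L * (\<tau> * norm h) + \<epsilon> / norm h * (\<tau> * norm h)"
        using lipschitz_onD[OF lip y(2) interior_subset[THEN subsetD, OF z]] approx[of y] y \<tau>
        by (intro add_mono) (auto simp: dist_norm)
      also have "\<dots> = \<tau> * (L * norm h + \<epsilon>)"
        using False by (simp add: field_simps)
      finally show "norm (D h) \<le> L * norm h + \<epsilon>"
        using \<tau>(1) by simp
    qed
  qed (simp add: D.zero)
qed

lemma exp_diff_le_exp_mult: "exp x - exp y \<le> exp x * (x - y)" for x y :: real
proof -
  have "exp x * (1 + (y - x)) \<le> exp x * exp (y - x)"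
    by (intro mult_left_mono exp_ge_add_one_self) simp
  then show ?thesis by (simp add: exp_diff algebra_simps)
qed

lemma abs_exp_diff_le: "\<bar>exp a - exp b\<bar> \<le> max (exp a) (exp b) * \<bar>a - b\<bar>" for a b :: real
  using exp_diff_le_exp_mult[of a b] exp_diff_le_exp_mult[of b a]
  by (cases "b \<le> a") (auto simp: max_def abs_if)

lemma norm_diff_quotient_le:
  fixes v w g :: "'a::real_normed_vector"
  assumes \<sigma>: "\<sigma> \<noteq> 0" and l: "0 \<le> l" "\<sigma> * l \<le> 1" and g: "norm g \<le> G"
  shows "(norm w - norm v) / \<sigma> \<le> G - l * norm v + norm (w - v + \<sigma> *\<^sub>R (g + l *\<^sub>R v)) / \<bar>\<sigma>\<bar>"
proof -
  define r where "r = w - v + \<sigma> *\<^sub>R (g + l *\<^sub>R v)"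
  have w: "w = (1 - \<sigma> * l) *\<^sub>R v - \<sigma> *\<^sub>R g + r" by (simp add: r_def algebra_simps)
  have expand: "(1 - \<sigma> * l) * norm v = norm v - \<sigma> * l * norm v" by (simp add: algebra_simps)
  show ?thesis
  proof (cases "\<sigma> > 0")
    case True
    have "norm w \<le> norm ((1 - \<sigma> * l) *\<^sub>R v) + norm (\<sigma> *\<^sub>R g) + norm r"
      unfolding w by (meson norm_triangle_ineq norm_triangle_ineq4 add_right_mono order_trans)
    also have "\<dots> = (1 - \<sigma> * l) * norm v + \<sigma> * norm g + norm r" using True l by simp
    finally have "norm w - norm v \<le> \<sigma> * norm g - \<sigma> * l * norm v + norm r" using expand by linarith
    also have "\<dots> \<le> \<sigma> * (G - l * norm v + norm r / \<bar>\<sigma>\<bar>)"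
      using True mult_left_mono[OF g, of \<sigma>] by (simp add: algebra_simps)
    finally show ?thesis using True by (simp add: r_def pos_divide_le_eq mult.commute)
  next
    case False
    then have neg: "\<sigma> < 0" using \<sigma> by simp
    have "(1 - \<sigma> * l) * norm v = norm (w + \<sigma> *\<^sub>R g - r)"
      using neg l by (simp add: w mult_nonpos_nonneg)
    also have "\<dots> \<le> norm w + norm (\<sigma> *\<^sub>R g) + norm r"
      by (meson norm_triangle_ineq norm_triangle_ineq4 add_right_mono order_trans)
    also have "\<dots> = norm w - \<sigma> * norm g + norm r" using neg by simp
    finally have "\<sigma> * norm g - \<sigma> * l * norm v - norm r \<le> norm w - norm v" using expand by linarith
    moreover have "\<sigma> * (G - l * norm v + norm r / \<bar>\<sigma>\<bar>) \<le> \<sigma> * norm g - \<sigma> * l * norm v - norm r"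
      using neg mult_left_mono[OF g, of "- \<sigma>"] by (simp add: algebra_simps)
    ultimately show ?thesis using neg by (simp add: r_def neg_divide_le_eq mult.commute)
  qed
qed

lemma lipschitz_on_integral:
  fixes f :: "real \<Rightarrow> real"
  assumes f: "f integrable_on {a..b}" and B: "0 \<le> B" "\<And>s. s \<in> {a..b} \<Longrightarrow> \<bar>f s\<bar> \<le> B"
  shows "B-lipschitz_on {a..b} (\<lambda>u. integral {a..u} f)"
proof -
  have "\<bar>integral {a..v} f - integral {a..u} f\<bar> \<le> B * (v - u)"
    if uv: "u \<in> {a..b}" "v \<in> {a..b}" "u \<le> v" for u v
  proof -
    have "integral {a..v} f - integral {a..u} f = integral {u..v} f"
      using Henstock_Kurzweil_Integration.integral_combine[where a=a and c=u and b=v and f=f] integrable_on_subinterval[OF f] uv by auto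
    also have "\<bar>\<dots>\<bar> \<le> integral {u..v} (\<lambda>_. B)"
      unfolding real_norm_def[symmetric]
    proof (rule integral_norm_bound_integral)
      show "f integrable_on {u..v}" using integrable_on_subinterval[OF f] uv by auto
    qed (use uv B(2) in auto)
    finally show ?thesis using uv by (simp add: mult.commute)
  qed
  note key = this
  show ?thesis
  proof (rule lipschitz_onI)
    fix x y assume "x \<in> {a..b}" "y \<in> {a..b}"
    then show "dist (integral {a..x} f) (integral {a..y} f) \<le> B * dist x y"
      using key[of x y] key[of y x] by (cases "x \<le> y") (auto simp: dist_real_def abs_minus_commute)
  qed (rule B(1))
qed

lemma AE_lborel_negligibleE:
  assumes "AE x in lborel. P x"
  obtains N where "negligible N" "\<And>x. x \<notin> N \<Longrightarrow> P x"
proof -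
  obtain N where "negligible N" "{x. \<not> P x} \<subseteq> N"
    using AE_completion[OF assms] unfolding eventually_ae_filter_negligible by blast
  then show thesis using that by blast
qed

lemma integral_exp_decay_const_rate:
  fixes \<kappa> :: "real \<Rightarrow> real"
  assumes lam: "lam > 0" and t: "t \<ge> 0" and const: "\<And>s. s \<in> {0..t} \<Longrightarrow> \<kappa> s = lam"
  shows "integral {0..t} (\<lambda>s. exp (- (integral {0..t} \<kappa> - integral {0..s} \<kappa>))) = (1 - exp (- lam * t)) / lam"
proof -
  have "integral {0..u} \<kappa> = lam * u" if "u \<in> {0..t}" for u
    using integral_cong[of "{0..u}" \<kappa> "\<lambda>_. lam"] const that by simp
  then have "integral {0..t} (\<lambda>s. exp (- (integral {0..t} \<kappa> - integral {0..s} \<kappa>)))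
      = integral {0..t} (\<lambda>s. exp (- (lam * t - lam * s)))"
    using t by (intro integral_cong) auto
  also have "\<dots> = (1 - exp (- lam * t)) / lam"
  proof (rule integral_unique)
    have "((\<lambda>s. exp (- (lam * t - lam * s))) has_integral
        exp (- (lam * t - lam * t)) / lam - exp (- (lam * t - lam * 0)) / lam) {0..t}"
    proof (rule fundamental_theorem_of_calculus[OF t])
      fix x assume "x \<in> {0..t}"
      have "((\<lambda>s. exp (- (lam * t - lam * s)) / lam) has_real_derivative exp (- (lam * t - lam * x)))
          (at x within {0..t})"
        using lam by (auto intro!: derivative_eq_intros)
      then show "((\<lambda>s. exp (- (lam * t - lam * s)) / lam) has_vector_derivative exp (- (lam * t - lam * x)))
          (at x within {0..t})"
        by (simp add: has_real_derivative_iff_has_vector_derivative)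
    qed
    then show "((\<lambda>s. exp (- (lam * t - lam * s))) has_integral (1 - exp (- lam * t)) / lam) {0..t}"
      by (simp add: diff_divide_distrib)
  qed
  finally show ?thesis .
qed

lemma threshold_integrable_on:
  fixes h :: "real \<Rightarrow> real" and c :: real
  assumes "continuous_on {a..b} h"
  shows "(\<lambda>s. if 0 \<le> h s then c else 0) integrable_on {a..b}"
proof -
  define A where "A = {a..b} \<inter> h -` {0..}"
  have "closed A" unfolding A_def by (rule continuous_closed_preimage[OF assms]) auto
  then have "A \<inter> {a..b} \<in> lmeasurable"
    by (intro lmeasurable_compact compact_Int_closed[of "{a..b}" A, simplified Int_commute]) auto
  then have "indicat_real A integrable_on {a..b}" using integrable_on_indicator by blast
  then have "(\<lambda>s. c * indicat_real A s) integrable_on {a..b}"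
    using integrable_cmul[of "indicat_real A" "{a..b}" c] by simp
  then show ?thesis by (rule integrable_eq) (simp add: A_def indicator_def)
qed

lemma integral_threshold_local_rate:
  fixes h :: "real \<Rightarrow> real"
  assumes h: "continuous_on {a..b} h" and c: "0 \<le> c" and x: "x \<in> {a..b}"
  defines "\<kappa> \<equiv> \<lambda>s. if 0 \<le> h s then c else 0"
  shows "\<forall>\<^sub>F y in at x within {a..b}. \<bar>integral {a..y} \<kappa> - integral {a..x} \<kappa>\<bar> \<le> \<kappa> x * \<bar>y - x\<bar>"
proof (cases "0 \<le> h x")
  case True
  have "c-lipschitz_on {a..b} (\<lambda>u. integral {a..u} \<kappa>)"
    using threshold_integrable_on[OF h] c by (intro lipschitz_on_integral) (auto simp: \<kappa>_def)
  then have "\<bar>integral {a..y} \<kappa> - integral {a..x} \<kappa>\<bar> \<le> \<kappa> x * \<bar>y - x\<bar>" if "y \<in> {a..b}" for y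
    using lipschitz_onD[OF _ that x] True by (fastforce simp: \<kappa>_def dist_real_def)
  then show ?thesis by (auto simp: eventually_at_filter)
next
  case False
  obtain d where d: "d > 0" and close: "\<forall>y\<in>{a..b}. dist y x < d \<longrightarrow> dist (h y) (h x) < - h x"
    using h x False unfolding continuous_on_iff by (meson neg_0_less_iff_less not_le)
  have int: "\<kappa> integrable_on {a..b}" unfolding \<kappa>_def by (rule threshold_integrable_on[OF h])
  have "integral {a..y} \<kappa> = integral {a..x} \<kappa>" if y: "y \<in> {a..b}" "dist y x < d" for y
  proof -
    have "\<kappa> s = 0" if "s \<in> {min x y..max x y}" for s
    proof -
      have "s \<in> {a..b}" "dist s x < d" using that x y by (auto simp: dist_real_def)
      then show ?thesis using close by (auto simp: \<kappa>_def dist_real_def)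
    qed
    then have "integral {min x y..max x y} \<kappa> = integral {min x y..max x y} (\<lambda>_. 0)"
      by (intro integral_cong) auto
    then have "integral {min x y..max x y} \<kappa> = 0" by simp
    moreover have "integral {a..min x y} \<kappa> + integral {min x y..max x y} \<kappa> = integral {a..max x y} \<kappa>"
      using x y integrable_on_subinterval[OF int]
      by (intro Henstock_Kurzweil_Integration.integral_combine) auto
    ultimately show ?thesis by (cases "x \<le> y") (auto simp: min_def max_def)
  qed
  then show ?thesis using d False unfolding eventually_at by (auto simp: \<kappa>_def)
qed

section \<open>A comparison principle for damped flows\<close>

text \<open>\<open>\<Lambda>\<close> stands for the integral of the damping rate \<open>\<kappa>\<close>; only its Lipschitz continuity and the
  local bound of its growth by \<open>\<kappa>\<close> are needed.\<close>
locale damped_flow =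
  fixes \<theta> :: "real \<Rightarrow> 'a::real_normed_vector" and g :: "real \<Rightarrow> 'a"
    and \<kappa> \<Lambda> :: "real \<Rightarrow> real" and G C t :: real and N :: "real set"
  assumes t_nonneg: "0 \<le> t"
    and abs_cont: "abs_continuous_on {0..t} \<theta>"
    and negligible_N: "negligible N"
    and flow: "\<And>s. s \<in> {0..t} - N \<Longrightarrow>
      (\<theta> has_vector_derivative (- g s - \<kappa> s *\<^sub>R (\<theta> s - \<theta> 0))) (at s within {0..t})"
    and g_bound: "\<And>s. s \<in> {0..t} \<Longrightarrow> norm (g s) \<le> G"
    and rate_nonneg: "\<And>s. s \<in> {0..t} \<Longrightarrow> 0 \<le> \<kappa> s"
    and lipschitz_\<Lambda>: "C-lipschitz_on {0..t} \<Lambda>"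
    and local_rate_\<Lambda>: "\<And>s. s \<in> {0..t} - N \<Longrightarrow>
      \<forall>\<^sub>F y in at s within {0..t}. \<bar>\<Lambda> y - \<Lambda> s\<bar> \<le> \<kappa> s * \<bar>y - s\<bar>"
begin

definition weight :: "real \<Rightarrow> real" where
  "weight s = exp (\<Lambda> s)"

definition potential :: "real \<Rightarrow> real" where
  "potential s = weight s * norm (\<theta> s - \<theta> 0) - G * integral {0..s} weight"

lemma G_nonneg: "0 \<le> G"
  using order_trans[OF norm_ge_zero g_bound[of 0]] t_nonneg by simp

lemma weight_pos: "0 < weight s"
  by (simp add: weight_def)

lemma continuous_on_weight: "continuous_on {0..t} weight"
  unfolding weight_def
  by (intro continuous_on_compose2[OF continuous_on_exp lipschitz_on_continuous_on[OF lipschitz_\<Lambda>]]) auto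

lemma weight_bounded:
  obtains K where "0 < K" "\<And>s. s \<in> {0..t} \<Longrightarrow> weight s \<le> K"
proof -
  have "bounded (weight ` {0..t})"
    by (intro compact_imp_bounded compact_continuous_image continuous_on_weight) auto
  then obtain K where "0 < K" "\<forall>x\<in>weight ` {0..t}. norm x \<le> K" unfolding bounded_pos by blast
  then show thesis using that[of K] by (auto simp: abs_of_pos weight_pos)
qed

lemma has_real_derivative_integral_weight:
  "x \<in> {0..t} \<Longrightarrow> ((\<lambda>u. integral {0..u} weight) has_real_derivative weight x) (at x within {0..t})"
  using integral_has_vector_derivative[OF continuous_on_weight]
  by (simp add: has_real_derivative_iff_has_vector_derivative)

lemma displacement_bounded:
  obtains R where "0 < R" "\<And>s. s \<in> {0..t} \<Longrightarrow> norm (\<theta> s - \<theta> 0) \<le> R"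
proof -
  have "bounded ((\<lambda>s. \<theta> s - \<theta> 0) ` {0..t})"
    using abs_continuous_on_imp_continuous_on[OF abs_cont]
    by (intro compact_imp_bounded compact_continuous_image continuous_intros) auto
  then show thesis using that unfolding bounded_pos by fastforce
qed

lemma abs_weight_diff_le:
  assumes uv: "u \<in> {0..t}" "v \<in> {0..t}" and K: "\<And>s. s \<in> {0..t} \<Longrightarrow> weight s \<le> K"
  shows "\<bar>weight v - weight u\<bar> \<le> K * (C * \<bar>v - u\<bar>)"
proof -
  have "\<bar>weight v - weight u\<bar> \<le> max (weight v) (weight u) * \<bar>\<Lambda> v - \<Lambda> u\<bar>"
    using abs_exp_diff_le by (simp add: weight_def)
  also have "\<dots> \<le> K * (C * \<bar>v - u\<bar>)"
    using lipschitz_onD[OF lipschitz_\<Lambda> uv(2,1)] K[OF uv(1)] K[OF uv(2)] weight_pos[of u]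
    by (intro mult_mono) (auto simp: dist_real_def)
  finally show ?thesis .
qed

lemma abs_potential_diff_le:
  "\<bar>potential v - potential u\<bar> \<le> weight v * \<bar>norm (\<theta> v - \<theta> 0) - norm (\<theta> u - \<theta> 0)\<bar>
    + \<bar>weight v - weight u\<bar> * norm (\<theta> u - \<theta> 0)
    + G * \<bar>integral {0..v} weight - integral {0..u} weight\<bar>"
proof -
  have "potential v - potential u = weight v * (norm (\<theta> v - \<theta> 0) - norm (\<theta> u - \<theta> 0))
      + (weight v - weight u) * norm (\<theta> u - \<theta> 0) - G * (integral {0..v} weight - integral {0..u} weight)"
    by (simp add: potential_def algebra_simps)
  then have "\<bar>potential v - potential u\<bar> \<le> \<bar>weight v * (norm (\<theta> v - \<theta> 0) - norm (\<theta> u - \<theta> 0))\<bar>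
      + \<bar>(weight v - weight u) * norm (\<theta> u - \<theta> 0)\<bar> + \<bar>G * (integral {0..v} weight - integral {0..u} weight)\<bar>"
    by linarith
  then show ?thesis using weight_pos[of v] G_nonneg by (simp add: abs_mult)
qed

lemma abs_continuous_potential: "abs_continuous_on {0..t} potential"
proof -
  obtain K where K: "0 < K" "\<And>s. s \<in> {0..t} \<Longrightarrow> weight s \<le> K" using weight_bounded by blast
  obtain R where R: "0 < R" "\<And>s. s \<in> {0..t} \<Longrightarrow> norm (\<theta> s - \<theta> 0) \<le> R"
    using displacement_bounded by blast
  have C: "0 \<le> C" using lipschitz_on_nonneg[OF lipschitz_\<Lambda>] .
  have "K-lipschitz_on {0..t} (\<lambda>u. integral {0..u} weight)"
    using K abs_of_pos[OF weight_pos] less_imp_le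
    by (intro lipschitz_on_integral integrable_continuous_interval continuous_on_weight) auto
  note integral_lipschitz = lipschitz_onD[OF this]
  show ?thesis
  proof (rule abs_continuous_on_dominated[OF abs_cont, of "K + K * C * R + G * K"])
    fix u v assume uv: "u \<in> {0..t}" "v \<in> {0..t}"
    have "weight v * \<bar>norm (\<theta> v - \<theta> 0) - norm (\<theta> u - \<theta> 0)\<bar> \<le> K * norm (\<theta> v - \<theta> u)"
      using norm_triangle_ineq3[of "\<theta> v - \<theta> 0" "\<theta> u - \<theta> 0"] K(2)[OF uv(2)] K(1)
      by (intro mult_mono) auto
    moreover have "\<bar>weight v - weight u\<bar> * norm (\<theta> u - \<theta> 0) \<le> K * (C * \<bar>v - u\<bar>) * R"
      using abs_weight_diff_le[OF uv K(2)] R(2)[OF uv(1)] K(1) C by (intro mult_mono) auto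
    moreover have "G * \<bar>integral {0..v} weight - integral {0..u} weight\<bar> \<le> G * (K * \<bar>v - u\<bar>)"
      using integral_lipschitz[OF uv(2,1)] G_nonneg by (intro mult_left_mono) (auto simp: dist_real_def)
    ultimately have "\<bar>potential v - potential u\<bar> \<le> K * norm (\<theta> v - \<theta> u) + K * (C * \<bar>v - u\<bar>) * R + G * (K * \<bar>v - u\<bar>)"
      using abs_potential_diff_le[of v u] by linarith
    also have "\<dots> \<le> (K + K * C * R + G * K) * (norm (\<theta> v - \<theta> u) + \<bar>v - u\<bar>)"
      using K C R G_nonneg by (simp add: algebra_simps)
    finally show "norm (potential v - potential u) \<le> (K + K * C * R + G * K) * (norm (\<theta> v - \<theta> u) + \<bar>v - u\<bar>)"
      by simp
  qed (use K C R G_nonneg in auto)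
qed

definition quotient_bound :: "real \<Rightarrow> real \<Rightarrow> real" where
  "quotient_bound x y = weight y * (G - \<kappa> x * norm (\<theta> x - \<theta> 0)
      + norm (\<theta> y - \<theta> x - (y - x) *\<^sub>R (- g x - \<kappa> x *\<^sub>R (\<theta> x - \<theta> 0))) / \<bar>y - x\<bar>)
    + norm (\<theta> x - \<theta> 0) * (max (weight y) (weight x) * \<kappa> x)
    - G * ((integral {0..y} weight - integral {0..x} weight) / (y - x))"

lemma potential_quotient_le:
  assumes x: "x \<in> {0..t}" and y: "y \<noteq> x"
    and rate: "\<bar>\<Lambda> y - \<Lambda> x\<bar> \<le> \<kappa> x * \<bar>y - x\<bar>" and close: "(y - x) * \<kappa> x \<le> 1"
  shows "(potential y - potential x) / (y - x) \<le> quotient_bound x y"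
proof -
  have \<sigma>: "y - x \<noteq> 0" using y by simp
  have "potential y - potential x = weight y * (norm (\<theta> y - \<theta> 0) - norm (\<theta> x - \<theta> 0))
      + norm (\<theta> x - \<theta> 0) * (weight y - weight x) - G * (integral {0..y} weight - integral {0..x} weight)"
    by (simp add: potential_def algebra_simps)
  then have split: "(potential y - potential x) / (y - x)
      = weight y * ((norm (\<theta> y - \<theta> 0) - norm (\<theta> x - \<theta> 0)) / (y - x))
        + norm (\<theta> x - \<theta> 0) * ((weight y - weight x) / (y - x))
        - G * ((integral {0..y} weight - integral {0..x} weight) / (y - x))"
    by (simp only: times_divide_eq_right add_divide_distrib[symmetric] diff_divide_distrib[symmetric])
  have "(norm (\<theta> y - \<theta> 0) - norm (\<theta> x - \<theta> 0)) / (y - x)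
      \<le> G - \<kappa> x * norm (\<theta> x - \<theta> 0)
          + norm (\<theta> y - \<theta> x - (y - x) *\<^sub>R (- g x - \<kappa> x *\<^sub>R (\<theta> x - \<theta> 0))) / \<bar>y - x\<bar>"
    using norm_diff_quotient_le[OF \<sigma> rate_nonneg[OF x] _ g_bound[OF x], of "\<theta> y - \<theta> 0" "\<theta> x - \<theta> 0"] close
    by (simp add: algebra_simps)
  then have "weight y * ((norm (\<theta> y - \<theta> 0) - norm (\<theta> x - \<theta> 0)) / (y - x))
      \<le> weight y * (G - \<kappa> x * norm (\<theta> x - \<theta> 0)
          + norm (\<theta> y - \<theta> x - (y - x) *\<^sub>R (- g x - \<kappa> x *\<^sub>R (\<theta> x - \<theta> 0))) / \<bar>y - x\<bar>)"
    using weight_pos[of y] by (intro mult_left_mono) auto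
  moreover have "(weight y - weight x) / (y - x) \<le> max (weight y) (weight x) * \<kappa> x"
  proof -
    have "(weight y - weight x) / (y - x) \<le> \<bar>weight y - weight x\<bar> / \<bar>y - x\<bar>"
      by (metis abs_divide abs_ge_self)
    also have "\<dots> \<le> max (weight y) (weight x) * \<bar>\<Lambda> y - \<Lambda> x\<bar> / \<bar>y - x\<bar>"
      using abs_exp_diff_le \<sigma> by (simp add: weight_def divide_right_mono)
    also have "\<dots> \<le> max (weight y) (weight x) * \<kappa> x"
      using rate \<sigma> weight_pos[of y] by (simp add: divide_le_eq mult_left_mono mult.assoc)
    finally show ?thesis .
  qed
  then have "norm (\<theta> x - \<theta> 0) * ((weight y - weight x) / (y - x))
      \<le> norm (\<theta> x - \<theta> 0) * (max (weight y) (weight x) * \<kappa> x)"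
    by (intro mult_left_mono) auto
  ultimately show ?thesis unfolding split quotient_bound_def by linarith
qed

lemma tendsto_quotient_bound:
  assumes x: "x \<in> {0..t} - N"
  shows "(quotient_bound x \<longlongrightarrow> 0) (at x within {0..t})"
proof -
  have x0: "x \<in> {0..t}" using x by simp
  have "((\<lambda>y. norm (\<theta> y - \<theta> x - (y - x) *\<^sub>R (- g x - \<kappa> x *\<^sub>R (\<theta> x - \<theta> 0))) / \<bar>y - x\<bar>) \<longlongrightarrow> 0)
      (at x within {0..t})"
    using flow[OF x] unfolding has_vector_derivative_def has_derivative_iff_norm by simp
  moreover have "(weight \<longlongrightarrow> weight x) (at x within {0..t})"
    using continuous_on_weight x0 by (simp add: continuous_on_def)
  moreover have "((\<lambda>y. (integral {0..y} weight - integral {0..x} weight) / (y - x)) \<longlongrightarrow> weight x)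
      (at x within {0..t})"
    using has_real_derivative_integral_weight[OF x0] by (simp add: has_field_derivative_iff)
  ultimately have "(quotient_bound x \<longlongrightarrow> weight x * (G - \<kappa> x * norm (\<theta> x - \<theta> 0) + 0)
      + norm (\<theta> x - \<theta> 0) * (max (weight x) (weight x) * \<kappa> x) - G * weight x) (at x within {0..t})"
    unfolding quotient_bound_def[abs_def] by (intro tendsto_intros)
  then show ?thesis by (simp add: algebra_simps)
qed

lemma upper_dini_nonpos_potential:
  assumes x: "x \<in> {0..t} - N"
  shows "upper_dini_nonpos_at potential {0..t} x"
proof -
  have x0: "x \<in> {0..t}" using x by simp
  have "\<forall>\<^sub>F y in at x within {0..t}. y \<noteq> x \<and> \<bar>y - x\<bar> < 1 / (\<kappa> x + 1)"
    using rate_nonneg[OF x0] unfolding eventually_at by (auto simp: dist_real_def intro!: exI[of _ "1 / (\<kappa> x + 1)"])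
  then have quotient_le: "\<forall>\<^sub>F y in at x within {0..t}. (potential y - potential x) / (y - x) \<le> quotient_bound x y"
    using local_rate_\<Lambda>[OF x]
  proof eventually_elim
    case (elim y)
    have "\<bar>y - x\<bar> * (\<kappa> x + 1) < 1" using elim rate_nonneg[OF x0] by (simp add: less_divide_eq)
    then have "(y - x) * \<kappa> x \<le> 1"
      using rate_nonneg[OF x0] mult_right_mono[OF abs_ge_self[of "y - x"], of "\<kappa> x"] by (simp add: algebra_simps)
    then show ?case using potential_quotient_le[OF x0] elim by simp
  qed
  show ?thesis
    unfolding upper_dini_nonpos_at_def
  proof (intro allI impI)
    fix e :: real assume "e > 0"
    from quotient_le order_tendstoD(2)[OF tendsto_quotient_bound[OF x] this]
    show "\<forall>\<^sub>F y in at x within {0..t}. (potential y - potential x) / (y - x) \<le> e"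
      by eventually_elim simp
  qed
qed

theorem norm_le_integral_exp:
  "norm (\<theta> t - \<theta> 0) \<le> G * integral {0..t} (\<lambda>s. exp (- (\<Lambda> t - \<Lambda> s)))"
proof -
  have "potential t \<le> potential 0"
    using abs_continuous_on_upper_dini_nonpos_imp_le[OF t_nonneg abs_continuous_potential negligible_N]
      upper_dini_nonpos_potential by blast
  then have "weight t * norm (\<theta> t - \<theta> 0) \<le> G * integral {0..t} weight"
    by (simp add: potential_def)
  moreover have "integral {0..t} weight = integral {0..t} (\<lambda>s. weight t * exp (- (\<Lambda> t - \<Lambda> s)))"
    by (intro integral_cong) (simp add: weight_def mult_exp_exp)
  then have "integral {0..t} weight = weight t * integral {0..t} (\<lambda>s. exp (- (\<Lambda> t - \<Lambda> s)))"
    by simp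
  ultimately show ?thesis
    using weight_pos[of t] by (simp add: mult.left_commute[of G])
qed

end

section \<open>The squared-loss risk\<close>

context
  fixes f :: "real^'p \<Rightarrow> real^'d \<Rightarrow> real" and X :: "real^'d^'n" and Y :: "real^'n"
    and gg :: "real^'d \<Rightarrow> real^'p \<Rightarrow> real^'p"
  assumes gg: "\<And>x v. ((\<lambda>v. f v x) has_derivative (\<lambda>h. gg x v \<bullet> h)) (at v)"
begin

lemma has_derivative_fX: "(fX f X has_derivative (\<lambda>h. \<chi> i. gg (X $ i) \<theta> \<bullet> h)) (at \<theta>)"
proof -
  have "((\<lambda>z. fX f X z \<bullet> b) has_derivative (\<lambda>h. (\<chi> i. gg (X $ i) \<theta> \<bullet> h) \<bullet> b)) (at \<theta>)"
    if b: "b \<in> Basis" for b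
  proof -
    obtain k where "b = axis k 1" using b by (auto simp: Basis_vec_def)
    then show ?thesis by (simp add: inner_axis fX_def gg)
  qed
  then show ?thesis using has_derivative_componentwise_within[of "fX f X" _ \<theta> UNIV] by simp
qed

lemma continuous_on_fX: "continuous_on S (fX f X)"
  using has_derivative_fX by (intro has_derivative_continuous_on) (auto intro: has_derivative_at_withinI)

lemma risk_grad_inner:
  "risk_grad f X Y \<theta> \<bullet> h = 2 * ((fX f X \<theta> - Y) \<bullet> (\<chi> i. gg (X $ i) \<theta> \<bullet> h))"
proof -
  have "(fX f X has_derivative (\<lambda>h. jacobian (fX f X) (at \<theta>) *v h)) (at \<theta>)"
    using has_derivative_fX differentiableI jacobian_works by blast
  then have "jacobian (fX f X) (at \<theta>) *v h = (\<chi> i. gg (X $ i) \<theta> \<bullet> h)"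
    using has_derivative_unique[OF _ has_derivative_fX] by metis
  then show ?thesis by (simp add: risk_grad_def dot_lmul_matrix)
qed

lemma has_derivative_risk: "(risk f X Y has_derivative (\<lambda>h. risk_grad f X Y \<theta> \<bullet> h)) (at \<theta>)"
proof -
  have "((\<lambda>z. fX f X z - Y) has_derivative (\<lambda>h. \<chi> i. gg (X $ i) \<theta> \<bullet> h)) (at \<theta>)"
    using has_derivative_diff[OF has_derivative_fX has_derivative_const] by simp
  from has_derivative_inner[OF this this]
  have "((\<lambda>z. (fX f X z - Y) \<bullet> (fX f X z - Y)) has_derivative
      (\<lambda>h. (fX f X \<theta> - Y) \<bullet> (\<chi> i. gg (X $ i) \<theta> \<bullet> h) + (\<chi> i. gg (X $ i) \<theta> \<bullet> h) \<bullet> (fX f X \<theta> - Y))) (at \<theta>)" .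
  moreover have "(\<lambda>z. (fX f X z - Y) \<bullet> (fX f X z - Y)) = risk f X Y"
    by (simp add: fun_eq_iff risk_def power2_norm_eq_inner)
  moreover have "(\<lambda>h. (fX f X \<theta> - Y) \<bullet> (\<chi> i. gg (X $ i) \<theta> \<bullet> h) + (\<chi> i. gg (X $ i) \<theta> \<bullet> h) \<bullet> (fX f X \<theta> - Y))
      = (\<lambda>h. risk_grad f X Y \<theta> \<bullet> h)"
  proof
    fix h
    show "(fX f X \<theta> - Y) \<bullet> (\<chi> i. gg (X $ i) \<theta> \<bullet> h) + (\<chi> i. gg (X $ i) \<theta> \<bullet> h) \<bullet> (fX f X \<theta> - Y)
        = risk_grad f X Y \<theta> \<bullet> h"
      using inner_commute[of "\<chi> i. gg (X $ i) \<theta> \<bullet> h" "fX f X \<theta> - Y"] by (simp add: risk_grad_inner)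
  qed
  ultimately show ?thesis by simp
qed

lemma continuous_on_risk_grad:
  assumes "\<And>x. continuous_on UNIV (gg x)"
  shows "continuous_on UNIV (risk_grad f X Y)"
proof -
  have "risk_grad f X Y = (\<lambda>z. \<chi> j. 2 * ((fX f X z - Y) \<bullet> (\<chi> i. gg (X $ i) z \<bullet> axis j 1)))"
    using risk_grad_inner[of _ "axis _ 1"] by (simp add: fun_eq_iff vec_eq_iff inner_axis)
  then show ?thesis using assms continuous_on_fX by (auto intro!: continuous_intros)
qed

lemma norm_risk_grad_le:
  assumes gg_cont: "\<And>x. continuous_on UNIV (gg x)"
    and lip: "L-lipschitz_on (cball c r) (fX f X)" and r: "r > 0" and z: "z \<in> cball c r"
  shows "norm (risk_grad f X Y z) \<le> 2 * L * norm (fX f X z - Y)"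
proof -
  have L: "0 \<le> L" using lipschitz_on_nonneg[OF lip] .
  \<comment> \<open>The Lipschitz bound on the Jacobian is only available in the interior; continuity of
    the gradient carries the estimate to the boundary sphere.\<close>
  have "ball c r \<subseteq> {z. norm (risk_grad f X Y z) \<le> 2 * L * norm (fX f X z - Y)}"
  proof
    fix z assume "z \<in> ball c r"
    then have D: "norm (\<chi> i. gg (X $ i) z \<bullet> h) \<le> L * norm h" for h
      using lipschitz_on_has_derivative_norm_le[OF lip _ has_derivative_fX] by simp
    let ?g = "risk_grad f X Y z"
    have "norm ?g * norm ?g = 2 * ((fX f X z - Y) \<bullet> (\<chi> i. gg (X $ i) z \<bullet> ?g))"
      using risk_grad_inner[of z ?g] by (simp add: dot_square_norm power2_eq_square)
    also have "\<dots> \<le> 2 * (norm (fX f X z - Y) * norm (\<chi> i. gg (X $ i) z \<bullet> ?g))"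
      using norm_cauchy_schwarz by simp
    also have "\<dots> \<le> 2 * (norm (fX f X z - Y) * (L * norm ?g))"
      using D[of ?g] by (simp add: mult_left_mono)
    also have "\<dots> = 2 * L * norm (fX f X z - Y) * norm ?g"
      by (simp add: algebra_simps)
    finally show "z \<in> {z. norm (risk_grad f X Y z) \<le> 2 * L * norm (fX f X z - Y)}"
      using L by (cases "?g = 0") (auto simp: mult_le_cancel_right_pos)
  qed
  moreover have "closed {z. norm (risk_grad f X Y z) \<le> 2 * L * norm (fX f X z - Y)}"
    using continuous_on_risk_grad[OF gg_cont] continuous_on_fX
    by (intro closed_Collect_le continuous_intros)
  ultimately have "closure (ball c r) \<subseteq> {z. norm (risk_grad f X Y z) \<le> 2 * L * norm (fX f X z - Y)}"
    by (rule closure_minimal)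
  then show ?thesis using z r by auto
qed

lemma risk_nonincreasing:
  fixes \<theta> :: "real \<Rightarrow> real^'p"
  assumes lip: "L-lipschitz_on S (fX f X)" and ab: "a \<le> b" and ac: "abs_continuous_on {a..b} \<theta>"
    and in_S: "\<theta> ` {a..b} \<subseteq> S" and N: "negligible N"
    and descent: "\<And>s. s \<in> {a..b} - N \<Longrightarrow>
      \<exists>V. (\<theta> has_vector_derivative V) (at s within {a..b}) \<and> risk_grad f X Y (\<theta> s) \<bullet> V \<le> 0"
  shows "risk f X Y (\<theta> b) \<le> risk f X Y (\<theta> a)"
proof (rule abs_continuous_on_upper_dini_nonpos_imp_le[where F = "\<lambda>s. risk f X Y (\<theta> s)", OF ab _ N])
  have "abs_continuous_on {a..b} (\<lambda>s. fX f X (\<theta> s) - Y)"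
  proof (rule abs_continuous_on_dominated[OF ac lipschitz_on_nonneg[OF lip]])
    fix u v assume "u \<in> {a..b}" "v \<in> {a..b}"
    then have "norm (fX f X (\<theta> v) - fX f X (\<theta> u)) \<le> L * norm (\<theta> v - \<theta> u)"
      using lipschitz_onD[OF lip] in_S by (simp add: dist_norm image_subset_iff)
    also have "\<dots> \<le> L * (norm (\<theta> v - \<theta> u) + \<bar>v - u\<bar>)"
      using lipschitz_on_nonneg[OF lip] by (simp add: mult_left_mono)
    finally show "norm (fX f X (\<theta> v) - Y - (fX f X (\<theta> u) - Y)) \<le> L * (norm (\<theta> v - \<theta> u) + \<bar>v - u\<bar>)"
      by simp
  qed
  then show "abs_continuous_on {a..b} (\<lambda>s. risk f X Y (\<theta> s))"
    unfolding risk_def by (rule abs_continuous_on_power2_norm)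
next
  fix x assume x: "x \<in> {a..b} - N"
  then obtain V where V: "(\<theta> has_vector_derivative V) (at x within {a..b})" "risk_grad f X Y (\<theta> x) \<bullet> V \<le> 0"
    using descent by blast
  have "((\<lambda>s. risk f X Y (\<theta> s)) has_derivative (\<lambda>h. risk_grad f X Y (\<theta> x) \<bullet> (h *\<^sub>R V))) (at x within {a..b})"
    using diff_chain_within[OF V(1)[unfolded has_vector_derivative_def]
        has_derivative_at_withinI[OF has_derivative_risk]] by (simp add: o_def)
  then have "((\<lambda>s. risk f X Y (\<theta> s)) has_real_derivative risk_grad f X Y (\<theta> x) \<bullet> V) (at x within {a..b})"
    unfolding has_field_derivative_def by (rule has_derivative_eq_rhs) (simp add: fun_eq_iff)
  then show "upper_dini_nonpos_at (\<lambda>s. risk f X Y (\<theta> s)) {a..b} x"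
    using V(2) by (rule upper_dini_nonpos_at_if_has_real_derivative)
qed

end

section \<open>The selectively regularized gradient flow\<close>

lemma sel_lambda_nonneg: "0 \<le> lam \<Longrightarrow> 0 \<le> sel_lambda f X Y \<theta>0 lam \<theta>"
  by (simp add: sel_lambda_def)

lemma risk_grad_inner_selective_flow_nonpos:
  assumes "0 \<le> lam"
  shows "risk_grad f X Y \<theta> \<bullet> (- risk_grad f X Y \<theta> - sel_lambda f X Y \<theta>0 lam \<theta> *\<^sub>R (\<theta> - \<theta>0)) \<le> 0"
proof -
  have "0 \<le> sel_lambda f X Y \<theta>0 lam \<theta> * (risk_grad f X Y \<theta> \<bullet> (\<theta> - \<theta>0))"
    using assms by (simp add: sel_lambda_def)
  moreover have "0 \<le> risk_grad f X Y \<theta> \<bullet> risk_grad f X Y \<theta>" by simp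
  ultimately show ?thesis by (simp only: inner_diff_right inner_minus_right inner_scaleR_right)
qed

locale selective_flow =
  fixes f :: "real^'p \<Rightarrow> real^'d \<Rightarrow> real" and X :: "real^'d^'n" and Y :: "real^'n"
    and gg :: "real^'d \<Rightarrow> real^'p \<Rightarrow> real^'p" and \<theta>0 :: "real^'p" and \<theta> :: "real \<Rightarrow> real^'p"
    and lam r L t :: real and N :: "real set"
  assumes gg_cont: "\<And>x. continuous_on UNIV (gg x)"
    and gg: "\<And>x v. ((\<lambda>v. f v x) has_derivative (\<lambda>h. gg x v \<bullet> h)) (at v)"
    and lam_pos: "0 < lam" and r_pos: "0 < r"
    and lip: "L-lipschitz_on (cball \<theta>0 r) (fX f X)"
    and abs_cont: "\<And>T. 0 \<le> T \<Longrightarrow> abs_continuous_on {0..T} \<theta>" and init: "\<theta> 0 = \<theta>0"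
    and negligible_N: "negligible N"
    and flow: "\<And>s. s \<in> {0..t} - N \<Longrightarrow> (\<theta> has_vector_derivative
      (- risk_grad f X Y (\<theta> s) - sel_lambda f X Y \<theta>0 lam (\<theta> s) *\<^sub>R (\<theta> s - \<theta>0))) (at s)"
    and t_nonneg: "0 \<le> t" and in_ball: "\<And>s. s \<in> {0..t} \<Longrightarrow> \<theta> s \<in> cball \<theta>0 r"
begin

definition rate :: "real \<Rightarrow> real" where
  "rate s = sel_lambda f X Y \<theta>0 lam (\<theta> s)"

lemma residual_le:
  assumes s: "s \<in> {0..t}"
  shows "norm (fX f X (\<theta> s) - Y) \<le> norm (fX f X \<theta>0 - Y)"
proof -
  have "risk f X Y (\<theta> s) \<le> risk f X Y (\<theta> 0)"
  proof (rule risk_nonincreasing[OF gg lip _ abs_cont _ negligible_N])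
    fix u assume u: "u \<in> {0..s} - N"
    let ?V = "- risk_grad f X Y (\<theta> u) - sel_lambda f X Y \<theta>0 lam (\<theta> u) *\<^sub>R (\<theta> u - \<theta>0)"
    have "(\<theta> has_vector_derivative ?V) (at u within {0..s})"
      using flow[of u] u s by (simp add: has_vector_derivative_at_within)
    moreover have "risk_grad f X Y (\<theta> u) \<bullet> ?V \<le> 0"
      using lam_pos by (simp add: risk_grad_inner_selective_flow_nonpos)
    ultimately show "\<exists>V. (\<theta> has_vector_derivative V) (at u within {0..s}) \<and> risk_grad f X Y (\<theta> u) \<bullet> V \<le> 0"
      by blast
  qed (use s in_ball in auto)
  then have "(norm (fX f X (\<theta> s) - Y))\<^sup>2 \<le> (norm (fX f X \<theta>0 - Y))\<^sup>2"
    using init by (simp add: risk_def)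
  then show ?thesis by (rule power2_le_imp_le) simp
qed

lemma norm_risk_grad_le_initial:
  assumes s: "s \<in> {0..t}"
  shows "norm (risk_grad f X Y (\<theta> s)) \<le> 2 * L * norm (fX f X \<theta>0 - Y)"
proof -
  have "norm (risk_grad f X Y (\<theta> s)) \<le> 2 * L * norm (fX f X (\<theta> s) - Y)"
    using norm_risk_grad_le[OF gg gg_cont lip r_pos in_ball[OF s]] .
  also have "\<dots> \<le> 2 * L * norm (fX f X \<theta>0 - Y)"
    using residual_le[OF s] lipschitz_on_nonneg[OF lip] by (simp add: mult_left_mono)
  finally show ?thesis .
qed

lemma continuous_on_switch: "continuous_on {0..t} (\<lambda>s. risk_grad f X Y (\<theta> s) \<bullet> (\<theta> s - \<theta>0))"
proof -
  have "continuous_on {0..t} \<theta>"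
    using abs_cont[OF t_nonneg] by (rule abs_continuous_on_imp_continuous_on)
  moreover from continuous_on_compose2[OF continuous_on_risk_grad[OF gg gg_cont] this]
  have "continuous_on {0..t} (\<lambda>s. risk_grad f X Y (\<theta> s))" by simp
  ultimately show ?thesis by (intro continuous_intros)
qed

lemma rate_eq: "rate = (\<lambda>s. if 0 \<le> risk_grad f X Y (\<theta> s) \<bullet> (\<theta> s - \<theta>0) then lam else 0)"
  by (simp add: fun_eq_iff rate_def sel_lambda_def)

lemma damped_flow: "damped_flow \<theta> (\<lambda>s. risk_grad f X Y (\<theta> s)) rate (\<lambda>u. integral {0..u} rate)
    (2 * L * norm (fX f X \<theta>0 - Y)) lam t N"
proof
  show "lam-lipschitz_on {0..t} (\<lambda>u. integral {0..u} rate)"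
    unfolding rate_eq using lam_pos
    by (intro lipschitz_on_integral threshold_integrable_on continuous_on_switch) auto
  fix s assume s: "s \<in> {0..t} - N"
  then show "\<forall>\<^sub>F y in at s within {0..t}. \<bar>integral {0..y} rate - integral {0..s} rate\<bar> \<le> rate s * \<bar>y - s\<bar>"
    unfolding rate_eq using lam_pos by (intro integral_threshold_local_rate continuous_on_switch) auto
  show "(\<theta> has_vector_derivative - risk_grad f X Y (\<theta> s) - rate s *\<^sub>R (\<theta> s - \<theta> 0)) (at s within {0..t})"
    using flow[OF s] init by (simp add: rate_def has_vector_derivative_at_within)
qed (use t_nonneg abs_cont negligible_N norm_risk_grad_le_initial lam_pos
    in \<open>auto simp: rate_def sel_lambda_nonneg\<close>)

lemma displacement_le:
  "norm (\<theta> t - \<theta>0) \<le> 2 * L * norm (fX f X \<theta>0 - Y)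
    * integral {0..t} (\<lambda>s. exp (- (integral {0..t} rate - integral {0..s} rate)))"
  using damped_flow.norm_le_integral_exp[OF damped_flow] init by simp

lemma displacement_le_constant_rate:
  assumes "\<forall>s\<in>{0..t}. rate s = lam"
  shows "norm (\<theta> t - \<theta>0) \<le> 2 * L * norm (fX f X \<theta>0 - Y) * ((1 - exp (- lam * t)) / lam)"
  using displacement_le integral_exp_decay_const_rate[OF lam_pos t_nonneg] assms by simp

end

theorem theorem2:
  fixes f :: "real^'p \<Rightarrow> real^'d \<Rightarrow> real"
    and X :: "real^'d^'n" and Y :: "real^'n"
    and \<theta>0 :: "real^'p" and \<theta> :: "real \<Rightarrow> real^'p"
    and lam r L t :: real
  assumes C1: "\<forall>x. \<exists>g. continuous_on UNIV g \<and>
                  (\<forall>v. ((\<lambda>v. f v x) has_derivative (\<lambda>h. g v \<bullet> h)) (at v))"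
    and lam_pos: "lam > 0" and r_pos: "r > 0"
    and lip: "L-lipschitz_on (cball \<theta>0 r) (fX f X)"
    and ac: "\<forall>T\<ge>0. abs_continuous_on {0..T} \<theta>"
    and init: "\<theta> 0 = \<theta>0"
    and flow: "AE s in lborel. s \<ge> 0 \<longrightarrow>
                 (\<theta> has_vector_derivative
                    (- risk_grad f X Y (\<theta> s) - sel_lambda f X Y \<theta>0 lam (\<theta> s) *\<^sub>R (\<theta> s - \<theta>0))) (at s)"
    and t_nonneg: "t \<ge> 0"
    and in_ball: "\<forall>s\<in>{0..t}. \<theta> s \<in> cball \<theta>0 r"
  shows "let \<Lambda> = (\<lambda>u. integral {0..u} (\<lambda>s. sel_lambda f X Y \<theta>0 lam (\<theta> s))) in
           norm (\<theta> t - \<theta>0) \<le> 2 * L * norm (fX f X \<theta>0 - Y) * integral {0..t} (\<lambda>s. exp (- (\<Lambda> t - \<Lambda> s)))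
         \<and> ((\<forall>s\<in>{0..t}. sel_lambda f X Y \<theta>0 lam (\<theta> s) = lam) \<longrightarrow>
              norm (\<theta> t - \<theta>0) \<le> 2 * L * norm (fX f X \<theta>0 - Y) * ((1 - exp (- lam * t)) / lam))"
proof -
  from choice[OF C1] obtain gg where "\<And>x. continuous_on UNIV (gg x)"
    and "\<And>x v. ((\<lambda>v. f v x) has_derivative (\<lambda>h. gg x v \<bullet> h)) (at v)"
    by blast
  moreover obtain N where "negligible N" "\<And>s. s \<notin> N \<Longrightarrow> 0 \<le> s \<Longrightarrow> (\<theta> has_vector_derivative
      (- risk_grad f X Y (\<theta> s) - sel_lambda f X Y \<theta>0 lam (\<theta> s) *\<^sub>R (\<theta> s - \<theta>0))) (at s)"
    using AE_lborel_negligibleE[OF flow] by blast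
  ultimately interpret selective_flow f X Y gg \<theta>0 \<theta> lam r L t N
    using lam_pos r_pos lip ac init t_nonneg in_ball by unfold_locales auto
  show ?thesis
    using displacement_le displacement_le_constant_rate by (simp add: Let_def rate_def[abs_def])
qed

end
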